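(* Let $c\in\mathbb{R}$ with $0<c<1$ and let $s\in\mathbb{C}$, $s\neq0$. Then $$\eta(s+1)=-\frac{\pi}{2s}\int_{-\infty}^{\infty}\frac{(c+it)^{-s}\cos\big(\pi(c+it)\big)}{\sin^2\big(\pi(c+it)\big)}\,dt .$$
   Context: $\eta(s)=(1-2^{1-s})\zeta(s)$ is Dirichlet's eta function, which equals $\sum_{k\ge1}(-1)^{k+1}k^{-s}$ for $\operatorname{Re}s>0$ and is entire. Powers $(c+it)^{-s}$ use the principal branch. *)

theory Defs
  imports "HOL-Analysis.Analysis"
begin

definition dirichlet_eta :: "complex \<Rightarrow> complex" where
  "dirichlet_eta = (THE f. f holomorphic_on UNIV \<and>
      (\<forall>z. 0 < Re z \<longrightarrow>
         (\<lambda>k::nat. (-1) ^ k / (of_nat (Suc k)) powr z) sums f z))"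

end

theory Submission
  imports Defs "HOL-Complex_Analysis.Complex_Analysis"
begin

text \<open>
  For \<open>x > 0\<close> not an integer let \<open>L x w\<close> (\<open>csc_line_integral x w\<close> below) be the
  integral of \<open>z powr (-w) / sin (pi * z)\<close> over the vertical line \<open>Re z = x\<close>. Since \<open>\<bar>sin (pi * z)\<bar>\<close> grows like
  \<open>exp (pi * \<bar>Im z\<bar>)\<close> while the power grows at most like \<open>exp \<bar>Im z\<bar>\<close>, locally uniformly
  in \<open>w\<close>, \<open>L x\<close> is entire. Moving the line of integration from \<open>x\<close> to \<open>x + 1\<close> across the
  simple pole at the integer \<open>k\<close> between them gives \<open>L (x + 1) w - L x w = 2 (-1)^k k powr (-w)\<close>
  by the residue theorem, and \<open>L (x + n) w \<longlonglongrightarrow> 0\<close> when \<open>Re w > 0\<close>. Telescoping shows that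
  \<open>L c w / 2\<close> is the alternating Dirichlet series for \<open>0 < c < 1\<close> and \<open>Re w > 0\<close>, so
  \<open>L c / 2 = dirichlet_eta\<close> by analytic continuation. Finally, integrating the derivative of
  \<open>(c + it) powr (-s) / sin (pi * (c + it))\<close> along the line, where the boundary terms vanish,
  turns the integral of the theorem into \<open>- (s / pi) * L c (s + 1)\<close>.
\<close>

section \<open>Estimates for sine, cosine and complex powers\<close>

lemma norm_sin_squared_eq: "norm (sin z) ^ 2 = sin (Re z) ^ 2 + sinh (Im z) ^ 2"
proof -
  have "norm (sin z) ^ 2 = (exp (2 * Im z) + inverse (exp (2 * Im z)) - 2 * cos (2 * Re z)) / 4"
    by (rule norm_sin_squared)
  also have "cos (2 * Re z) = 1 - 2 * sin (Re z) ^ 2"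
    by (simp add: cos_double_sin)
  also have "exp (2 * Im z) = exp (Im z) ^ 2"
    by (simp add: exp_double[symmetric])
  finally show ?thesis
    by (simp add: sinh_def exp_minus power2_eq_square field_simps)
qed

lemma abs_sin_Re_mult_cosh_Im_le: "\<bar>sin (Re z)\<bar> * cosh (Im z) \<le> norm (sin z)"
proof (rule power2_le_imp_le)
  have "sin (Re z) ^ 2 * sinh (Im z) ^ 2 \<le> sinh (Im z) ^ 2"
    by (simp add: mult_left_le_one_le abs_square_le_1)
  then show "(\<bar>sin (Re z)\<bar> * cosh (Im z)) ^ 2 \<le> norm (sin z) ^ 2"
    by (simp add: norm_sin_squared_eq power_mult_distrib cosh_square_eq algebra_simps)
qed simp

lemma abs_sinh_Im_le_norm_sin: "\<bar>sinh (Im z)\<bar> \<le> norm (sin z)"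
  by (rule power2_le_imp_le) (simp_all add: norm_sin_squared_eq)

lemma norm_cos_le_cosh_Im: "norm (cos z) \<le> cosh (Im z)"
proof (rule power2_le_imp_le)
  have "norm (cos z) ^ 2 = cos (Re z) ^ 2 + sinh (Im z) ^ 2"
    using norm_sin_squared_eq[of "z + pi / 2"] by (simp add: sin_add)
  moreover have "cos (Re z) ^ 2 \<le> 1"
    by (simp add: abs_square_le_1)
  ultimately show "norm (cos z) ^ 2 \<le> cosh (Im z) ^ 2"
    by (simp add: cosh_square_eq)
qed simp

lemma exp_abs_le_two_cosh: "exp \<bar>x\<bar> \<le> 2 * cosh (x :: real)"
  by (cases "x \<ge> 0") (auto simp: cosh_def)

lemma exp_abs_le_four_abs_sinh:
  fixes y :: real
  assumes "1 \<le> \<bar>y\<bar>"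
  shows "exp \<bar>y\<bar> \<le> 4 * \<bar>sinh y\<bar>"
proof -
  have "2 \<le> exp \<bar>y\<bar>"
    using exp_ge_add_one_self[of "\<bar>y\<bar>"] assms by linarith
  moreover have "exp (- \<bar>y\<bar>) \<le> 1"
    by simp
  moreover have "4 * \<bar>sinh y\<bar> = 2 * exp \<bar>y\<bar> - 2 * exp (- \<bar>y\<bar>)"
    by (cases "y \<ge> 0") (auto simp: sinh_def)
  ultimately show ?thesis
    by linarith
qed

lemma norm_sin_pi_Complex_ge:
  "\<bar>sin (pi * x)\<bar> / 2 * exp (pi * \<bar>t\<bar>) \<le> norm (sin (pi * Complex x t))"
proof -
  have "exp (pi * \<bar>t\<bar>) \<le> 2 * cosh (pi * t)"
    using exp_abs_le_two_cosh[of "pi * t"] by (simp add: abs_mult)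
  from mult_left_mono[OF this, of "\<bar>sin (pi * x)\<bar>"]
  have "\<bar>sin (pi * x)\<bar> / 2 * exp (pi * \<bar>t\<bar>) \<le> \<bar>sin (pi * x)\<bar> * cosh (pi * t)"
    by (simp add: mult_ac)
  also have "\<dots> \<le> norm (sin (pi * Complex x t))"
    using abs_sin_Re_mult_cosh_Im_le[of "pi * Complex x t"] by simp
  finally show ?thesis .
qed

lemma norm_cot_pi_Complex_le:
  assumes "x \<notin> \<int>"
  shows "norm (cos (pi * Complex x t) / sin (pi * Complex x t)) \<le> 1 / \<bar>sin (pi * x)\<bar>"
proof -
  have sin_x: "0 < \<bar>sin (pi * x)\<bar>"
    using assms sin_times_pi_eq_0[of x] by (simp add: mult.commute)
  have "norm (cos (pi * Complex x t)) \<le> cosh (pi * t)"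
    using norm_cos_le_cosh_Im[of "pi * Complex x t"] by simp
  moreover have "\<bar>sin (pi * x)\<bar> * cosh (pi * t) \<le> norm (sin (pi * Complex x t))"
    using abs_sin_Re_mult_cosh_Im_le[of "pi * Complex x t"] by simp
  ultimately have "norm (cos (pi * Complex x t)) / norm (sin (pi * Complex x t))
                     \<le> cosh (pi * t) / (\<bar>sin (pi * x)\<bar> * cosh (pi * t))"
    using sin_x by (intro frac_le) auto
  then show ?thesis
    by (simp add: norm_divide)
qed

lemma abs_sin_pi_add_nat: "\<bar>sin (pi * (x + real n))\<bar> = \<bar>sin (pi * x)\<bar>"
proof -
  have "sin (pi * (x + real n)) = sin (pi * x) * cos (pi * real n)"
    by (simp add: distrib_left sin_add)
  then show ?thesis
    by (simp add: abs_mult)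
qed

lemma sin_pi_eq_0_iff_Ints:
  fixes z :: complex
  shows "sin (of_real pi * z) = 0 \<longleftrightarrow> z \<in> \<int>"
proof
  assume "sin (of_real pi * z) = 0"
  then obtain n :: int where "of_real pi * z = of_real (of_int n * pi)"
    unfolding sin_eq_0 by blast
  then have "z = of_int n"
    by (simp add: mult.commute)
  then show "z \<in> \<int>"
    by simp
next
  assume "z \<in> \<int>"
  then show "sin (of_real pi * z) = 0"
    by (auto elim!: Ints_cases simp: sin_eq_0 mult.commute)
qed

lemma Complex_notin_Ints: "x \<notin> \<int> \<Longrightarrow> Complex x t \<notin> \<int>"
  by (auto elim!: Ints_cases simp: complex_eq_iff)

lemma Ints_not_between:
  fixes x :: real
  assumes "of_int n < x" "x < of_int n + 1"
  shows "x \<notin> \<int>"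
proof
  assume "x \<in> \<int>"
  then obtain m where "x = of_int m"
    by (auto elim: Ints_cases)
  with assms have "n < m" "m < n + 1"
    by linarith+
  then show False
    by linarith
qed

lemma norm_powr_minus_le:
  assumes "0 < Re z"
  shows "norm (z powr (-w)) \<le> norm z powr (- Re w) * exp (pi / 2 * \<bar>Im w\<bar>)"
proof -
  have "\<bar>Arg z\<bar> < pi / 2"
    using assms Arg_Re_pos by blast
  then have "Im w * Arg z \<le> \<bar>Im w\<bar> * (pi / 2)"
    using abs_ge_self[of "Im w * Arg z"] mult_left_mono[of "\<bar>Arg z\<bar>" "pi / 2" "\<bar>Im w\<bar>"]
    by (simp add: abs_mult)
  then have "exp (Im w * Arg z) \<le> exp (pi / 2 * \<bar>Im w\<bar>)"
    by (simp add: mult.commute)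
  then show ?thesis
    by (simp add: norm_powr_complex mult_left_mono)
qed

lemma powr_le_powr_add_powr:
  fixes m r M a R :: real
  assumes "0 < m" "m \<le> r" "r \<le> M" "\<bar>a\<bar> \<le> R"
  shows "r powr a \<le> m powr (- R) + M powr R"
proof (cases "1 \<le> r")
  case True
  then have "r powr a \<le> r powr R"
    using assms by (intro powr_mono) auto
  also have "\<dots> \<le> M powr R"
    using assms by (intro powr_mono2) auto
  finally show ?thesis
    by (simp add: add_increasing)
next
  case False
  then have "r powr a \<le> r powr (- R)"
    using assms by (intro powr_mono') auto
  also have "\<dots> \<le> m powr (- R)"
    using assms by (intro powr_mono2') auto
  finally show ?thesis
    by (simp add: add_increasing2)
qed

lemma power_le_fact_mult_exp:
  fixes x :: real
  assumes "0 \<le> x"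
  shows "x ^ n \<le> fact n * exp x"
proof -
  have "summable (\<lambda>k. x ^ k /\<^sub>R fact k)"
    using exp_converges[of x] by (simp add: sums_iff)
  then have "(\<Sum>k<Suc n. x ^ k /\<^sub>R fact k) \<le> (\<Sum>k. x ^ k /\<^sub>R fact k)"
    using assms by (intro sum_le_suminf) auto
  then have "(\<Sum>k<Suc n. x ^ k /\<^sub>R fact k) \<le> exp x"
    by (simp add: exp_def)
  moreover have "x ^ n / fact n \<le> (\<Sum>k<Suc n. x ^ k /\<^sub>R fact k)"
    using sum_nonneg[of "{..<n}" "\<lambda>k. x ^ k /\<^sub>R fact k"] assms
    by (simp add: divide_inverse mult.commute)
  ultimately show ?thesis
    by (simp add: divide_simps mult.commute)
qed

lemma powr_le_fact_mult_exp:
  fixes x R :: real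
  assumes "0 \<le> x" "0 \<le> R"
  shows "x powr R \<le> fact (nat \<lceil>R\<rceil>) * exp (x + 1)"
proof -
  have "x powr R \<le> (x + 1) powr R"
    using assms by (intro powr_mono2) auto
  also have "\<dots> \<le> (x + 1) powr real (nat \<lceil>R\<rceil>)"
    using assms real_nat_ceiling_ge[of R] by (intro powr_mono) auto
  also have "\<dots> = (x + 1) ^ nat \<lceil>R\<rceil>"
    using assms by (subst powr_realpow) auto
  also have "\<dots> \<le> fact (nat \<lceil>R\<rceil>) * exp (x + 1)"
    using assms by (intro power_le_fact_mult_exp) simp
  finally show ?thesis .
qed

lemma norm_powr_minus_le_exp_abs_Im:
  assumes "0 < m" "m \<le> norm z" "0 < Re z" "Re z \<le> X" "\<bar>Re w\<bar> \<le> R" "\<bar>Im w\<bar> \<le> R"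
  shows "norm (z powr (-w))
           \<le> (m powr (- R) + fact (nat \<lceil>R\<rceil>) * exp (X + 1)) * exp (pi / 2 * R) * exp \<bar>Im z\<bar>"
proof -
  have R: "0 \<le> R"
    using assms by linarith
  have "norm z \<le> X + \<bar>Im z\<bar>"
    using cmod_le[of z] assms by simp
  then have "norm z powr (- Re w) \<le> m powr (- R) + (X + \<bar>Im z\<bar>) powr R"
    using assms by (intro powr_le_powr_add_powr) auto
  also have "\<dots> \<le> (m powr (- R) + fact (nat \<lceil>R\<rceil>) * exp (X + 1)) * exp \<bar>Im z\<bar>"
  proof -
    have "(X + \<bar>Im z\<bar>) powr R \<le> fact (nat \<lceil>R\<rceil>) * exp (X + 1) * exp \<bar>Im z\<bar>"
      using powr_le_fact_mult_exp[of "X + \<bar>Im z\<bar>" R] assms R by (simp add: exp_add mult_ac)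
    moreover have "m powr (- R) \<le> m powr (- R) * exp \<bar>Im z\<bar>"
      using mult_left_mono[of 1 "exp \<bar>Im z\<bar>" "m powr (- R)"] by simp
    ultimately show ?thesis
      by (simp add: distrib_right)
  qed
  finally have "norm z powr (- Re w) * exp (pi / 2 * \<bar>Im w\<bar>)
      \<le> (m powr (- R) + fact (nat \<lceil>R\<rceil>) * exp (X + 1)) * exp \<bar>Im z\<bar> * exp (pi / 2 * R)"
    using assms by (intro mult_mono) auto
  then show ?thesis
    using norm_powr_minus_le[of z w] assms by (simp add: mult_ac)
qed

lemma divide_le_mult_exp_minus_abs:
  fixes a b A B t :: real
  assumes "0 \<le> a" "a \<le> A * exp \<bar>t\<bar>" "B * exp (pi * \<bar>t\<bar>) \<le> b" "0 < B"
  shows "a / b \<le> A / B * exp (- \<bar>t\<bar>)"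
proof -
  have "0 \<le> A * exp \<bar>t\<bar>"
    using assms by linarith
  then have A: "0 \<le> A"
    by (simp add: zero_le_mult_iff)
  have Bt: "0 < B * exp (pi * \<bar>t\<bar>)"
    using assms by simp
  have "a / b \<le> A * exp \<bar>t\<bar> / (B * exp (pi * \<bar>t\<bar>))"
    using assms Bt by (intro frac_le) auto
  also have "\<dots> = A / B * exp (\<bar>t\<bar> - pi * \<bar>t\<bar>)"
    by (simp add: exp_diff)
  also have "\<dots> \<le> A / B * exp (- \<bar>t\<bar>)"
  proof -
    have "\<bar>t\<bar> - pi * \<bar>t\<bar> \<le> - \<bar>t\<bar>"
      using mult_right_mono[of 2 pi "\<bar>t\<bar>"] pi_gt3 by linarith
    then show ?thesis
      using A assms by (intro mult_left_mono) auto
  qed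
  finally show ?thesis .
qed

section \<open>Integrals over the real line\<close>

lemma integrable_exp_minus_abs: "(\<lambda>t::real. exp (- \<bar>t\<bar>)) integrable_on UNIV"
proof -
  have right: "(\<lambda>t::real. exp (- 1 * t)) integrable_on {0..}"
    by (rule integrable_on_exp_minus_to_infinity) simp
  then have "(\<lambda>t::real. exp (- t)) absolutely_integrable_on {0..}"
    by (intro nonnegative_absolutely_integrable_1) auto
  then have "(\<lambda>t::real. exp (- (- t))) absolutely_integrable_on {..0}"
    using has_absolute_integral_reflect_real[of "{..0}" "{0..}" "\<lambda>t. exp (- t)"]
    by (auto simp: image_iff)
  then have "(\<lambda>t::real. exp (- \<bar>t\<bar>)) integrable_on {..0}"
    by (rule integrable_eq[OF absolutely_integrable_on_def[THEN iffD1, THEN conjunct1]]) auto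
  moreover have "(\<lambda>t::real. exp (- \<bar>t\<bar>)) integrable_on {0..}"
    using right by (rule integrable_eq) auto
  moreover have "negligible ({..0} \<inter> {0::real..})"
  proof -
    have "{..0} \<inter> {0::real..} = {0}"
      by auto
    then show ?thesis
      by simp
  qed
  ultimately have "(\<lambda>t::real. exp (- \<bar>t\<bar>)) integrable_on ({..0} \<union> {0..})"
    by (intro integrable_Un)
  moreover have "{..0} \<union> {0..} = (UNIV :: real set)"
    by auto
  ultimately show ?thesis
    by simp
qed

lemma integrable_on_UNIV_exp_decay:
  fixes f :: "real \<Rightarrow> 'a::banach"
  assumes "continuous_on UNIV f" "\<And>t. norm (f t) \<le> K * exp (- \<bar>t\<bar>)"
  shows "f integrable_on UNIV"
proof (rule integrable_on_all_intervals_integrable_bound)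
  show "(\<lambda>t. if t \<in> UNIV then f t else 0) integrable_on cbox a b" for a b
    using continuous_on_subset[OF assms(1)] by (simp add: integrable_continuous_real)
  show "(\<lambda>t. K * exp (- \<bar>t\<bar>)) integrable_on UNIV"
    using integrable_exp_minus_abs by (rule integrable_on_mult_right)
qed (use assms(2) in auto)

lemma integrable_outside_ivl:
  fixes f :: "real \<Rightarrow> 'a::euclidean_space"
  assumes "f integrable_on UNIV"
  shows "(\<lambda>t. if t \<in> {a..b} then 0 else f t) integrable_on UNIV"
proof -
  have "f integrable_on {a..b}"
    using assms integrable_on_subcbox[of f UNIV a b] by simp
  then have "(\<lambda>t. if t \<in> {a..b} then f t else 0) integrable_on UNIV"
    by (simp only: integrable_restrict_UNIV)
  then have "(\<lambda>t. f t - (if t \<in> {a..b} then f t else 0)) integrable_on UNIV"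
    using assms by (intro integrable_diff)
  then show ?thesis
    by (rule integrable_eq) auto
qed

lemma integral_outside_ivl:
  fixes f :: "real \<Rightarrow> 'a::euclidean_space"
  assumes "f integrable_on UNIV"
  shows "integral UNIV (\<lambda>t. if t \<in> {a..b} then 0 else f t) = integral UNIV f - integral {a..b} f"
proof -
  have "f integrable_on {a..b}"
    using assms integrable_on_subcbox[of f UNIV a b] by simp
  then have "(\<lambda>t. if t \<in> {a..b} then f t else 0) integrable_on UNIV"
    by (simp only: integrable_restrict_UNIV)
  moreover have "integral {a..b} f = integral UNIV (\<lambda>t. if t \<in> {a..b} then f t else 0)"
    by (simp only: integral_restrict_UNIV)
  ultimately have "integral UNIV (\<lambda>t. f t - (if t \<in> {a..b} then f t else 0))
               = integral UNIV f - integral {a..b} f"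
    using assms by (simp add: integral_diff)
  moreover have "integral UNIV (\<lambda>t. f t - (if t \<in> {a..b} then f t else 0))
                  = integral UNIV (\<lambda>t. if t \<in> {a..b} then 0 else f t)"
    by (rule integral_cong) auto
  ultimately show ?thesis
    by simp
qed

lemma integral_outside_symmetric_ivl_tendsto_0:
  fixes h :: "real \<Rightarrow> real"
  assumes "h integrable_on UNIV" "\<And>t. 0 \<le> h t"
  shows "(\<lambda>n::nat. integral UNIV (\<lambda>t. if t \<in> {- real n..real n} then 0 else h t)) \<longlonglongrightarrow> 0"
proof -
  define F where "F = (\<lambda>(n::nat) t. if t \<in> {- real n..real n} then 0 else h t)"
  have conv: "(\<lambda>n. F n t) \<longlonglongrightarrow> (\<lambda>t. 0) t" if "t \<in> UNIV" for t
  proof (rule tendsto_eventually)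
    obtain N :: nat where "\<bar>t\<bar> \<le> real N"
      using real_arch_simple by blast
    then show "eventually (\<lambda>n. F n t = (\<lambda>t. 0) t) sequentially"
      unfolding eventually_sequentially F_def by (intro exI[of _ N]) auto
  qed
  have int: "F n integrable_on UNIV" for n
    unfolding F_def using assms(1) by (rule integrable_outside_ivl)
  have le: "norm (F n t) \<le> h t" if "t \<in> UNIV" for n t
    using assms(2) by (simp add: F_def)
  have "(\<lambda>n. integral UNIV (F n)) \<longlonglongrightarrow> integral UNIV (\<lambda>t. 0 :: real)"
    using dominated_convergence(2)[OF int assms(1) le conv] by simp
  then show ?thesis
    by (simp add: F_def)
qed

lemma norm_integral_minus_integral_ivl_le:
  fixes f :: "real \<Rightarrow> 'a::euclidean_space"
  assumes "f integrable_on UNIV" "h integrable_on UNIV" "\<And>t. norm (f t) \<le> h t"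
  shows "norm (integral UNIV f - integral {a..b} f)
           \<le> integral UNIV (\<lambda>t. if t \<in> {a..b} then 0 else h t)"
  unfolding integral_outside_ivl[OF assms(1), symmetric]
  using assms by (intro integral_norm_bound_integral integrable_outside_ivl) auto

lemma integral_symmetric_ivl_tendsto:
  fixes f :: "real \<Rightarrow> 'a::euclidean_space"
  assumes "f integrable_on UNIV" "h integrable_on UNIV" "\<And>t. norm (f t) \<le> h t"
  shows "(\<lambda>n::nat. integral {- real n..real n} f) \<longlonglongrightarrow> integral UNIV f"
proof -
  have "0 \<le> h t" for t
    using assms(3)[of t] norm_ge_zero[of "f t"] by linarith
  then have "(\<lambda>n::nat. integral UNIV (\<lambda>t. if t \<in> {- real n..real n} then 0 else h t)) \<longlonglongrightarrow> 0"
    using assms(2) by (intro integral_outside_symmetric_ivl_tendsto_0)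
  then have "(\<lambda>n. integral UNIV f - integral {- real n..real n} f) \<longlonglongrightarrow> 0"
    by (rule Lim_null_comparison[rotated]) (use norm_integral_minus_integral_ivl_le[OF assms] in auto)
  from tendsto_diff[OF tendsto_const this, of "integral UNIV f"] show ?thesis
    by simp
qed

lemma tendsto_0_at_infinity_exp_decay:
  fixes f :: "real \<Rightarrow> 'a::real_normed_vector"
  assumes "\<And>t. 1 \<le> \<bar>t\<bar> \<Longrightarrow> norm (f t) \<le> C * exp (- \<bar>t\<bar>)"
  shows "(f \<longlongrightarrow> 0) at_infinity"
proof (rule Lim_null_comparison)
  show "eventually (\<lambda>t. norm (f t) \<le> C * exp (- \<bar>t\<bar>)) at_infinity"
    using assms by (auto simp: eventually_at_infinity intro!: exI[of _ 1])
  have "((\<lambda>t::real. exp (- norm t)) \<longlongrightarrow> 0) at_infinity"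
    by (rule filterlim_compose[OF exp_at_bot filterlim_compose[OF filterlim_uminus_at_bot_at_top
          filterlim_norm_at_top]])
  from tendsto_mult_right_zero[OF this, of C] show "((\<lambda>t. C * exp (- \<bar>t\<bar>)) \<longlongrightarrow> 0) at_infinity"
    by simp
qed

lemma tendsto_at_infinity_along_nat:
  fixes f :: "real \<Rightarrow> 'a::topological_space"
  assumes "(f \<longlongrightarrow> l) at_infinity"
  shows "(\<lambda>n. f (real n)) \<longlonglongrightarrow> l" "(\<lambda>n. f (- real n)) \<longlonglongrightarrow> l"
proof -
  have "filterlim (\<lambda>n. real n) at_infinity sequentially"
    by (rule filterlim_at_top_imp_at_infinity[OF filterlim_real_sequentially])
  moreover have "filterlim (\<lambda>n. - real n) at_infinity sequentially"
    by (rule filterlim_norm_at_top_imp_at_infinity) (simp add: filterlim_real_sequentially)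
  ultimately show "(\<lambda>n. f (real n)) \<longlonglongrightarrow> l" "(\<lambda>n. f (- real n)) \<longlonglongrightarrow> l"
    using filterlim_compose[OF assms] by auto
qed


lemma holomorphic_on_integral_UNIV:
  fixes f :: "complex \<Rightarrow> real \<Rightarrow> complex"
  assumes holo: "\<And>n::nat. (\<lambda>w. integral {- real n..real n} (f w)) holomorphic_on UNIV"
    and int: "\<And>w. w \<in> cball w0 r \<Longrightarrow> f w integrable_on UNIV"
    and bound: "\<And>w t. w \<in> cball w0 r \<Longrightarrow> norm (f w t) \<le> h t" and "h integrable_on UNIV"
    and "0 < r"
  shows "(\<lambda>w. integral UNIV (f w)) holomorphic_on ball w0 r"
proof -
  have "w0 \<in> cball w0 r"
    using \<open>0 < r\<close> by simp
  then have h_nonneg: "0 \<le> h t" for t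
    using bound norm_ge_zero order_trans by meson
  have "uniform_limit (cball w0 r) (\<lambda>n w. integral {- real n..real n} (f w))
          (\<lambda>w. integral UNIV (f w)) sequentially"
  proof (rule uniform_limitI)
    fix e :: real
    assume "0 < e"
    with integral_outside_symmetric_ivl_tendsto_0[OF \<open>h integrable_on UNIV\<close> h_nonneg]
    have "eventually (\<lambda>n::nat. integral UNIV (\<lambda>t. if t \<in> {- real n..real n} then 0 else h t) < e)
            sequentially"
      by (rule order_tendstoD(2))
    then show "eventually (\<lambda>n. \<forall>w\<in>cball w0 r.
                 dist (integral {- real n..real n} (f w)) (integral UNIV (f w)) < e) sequentially"
    proof (rule eventually_mono, safe)
      fix n w
      assume "integral UNIV (\<lambda>t. if t \<in> {- real n..real n} then 0 else h t) < e" "w \<in> cball w0 r"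
      then show "dist (integral {- real n..real n} (f w)) (integral UNIV (f w)) < e"
        using norm_integral_minus_integral_ivl_le[of "f w" h "- real n" "real n"] assms
        by (simp add: dist_norm norm_minus_commute)
    qed
  qed
  moreover have "eventually (\<lambda>n::nat. continuous_on (cball w0 r) (\<lambda>w. integral {- real n..real n} (f w))
                   \<and> (\<lambda>w. integral {- real n..real n} (f w)) holomorphic_on ball w0 r) sequentially"
  proof (intro always_eventually allI conjI)
    fix n :: nat
    show "continuous_on (cball w0 r) (\<lambda>w. integral {- real n..real n} (f w))"
      using holomorphic_on_imp_continuous_on[OF holo] by (rule continuous_on_subset) auto
    show "(\<lambda>w. integral {- real n..real n} (f w)) holomorphic_on ball w0 r"
      using holo by (rule holomorphic_on_subset) auto
  qed
  ultimately show ?thesis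
    by (elim holomorphic_uniform_limit) auto
qed

section \<open>The function \<open>z powr (-w) / sin (pi * z)\<close> and its vertical line integrals\<close>

definition powr_csc :: "complex \<Rightarrow> complex \<Rightarrow> complex" where
  "powr_csc w z = z powr (-w) / sin (of_real pi * z)"

lemma holomorphic_powr_csc: "powr_csc w holomorphic_on {z. 0 < Re z} - \<int>"
  unfolding powr_csc_def
  by (intro holomorphic_intros) (auto simp: complex_nonpos_Reals_iff sin_pi_eq_0_iff_Ints)

lemma continuous_on_Complex [continuous_intros]:
  "continuous_on S f \<Longrightarrow> continuous_on S (\<lambda>p. Complex x (f p))"
  unfolding Complex_eq by (intro continuous_intros)

lemma continuous_on_powr_csc_vertical:
  assumes "0 < x" "x \<notin> \<int>"
  shows "continuous_on UNIV (\<lambda>t. powr_csc w (Complex x t))"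
proof (rule continuous_on_compose2[OF holomorphic_on_imp_continuous_on[OF holomorphic_powr_csc]])
  show "continuous_on UNIV (\<lambda>t. Complex x t)"
    by (intro continuous_intros)
qed (use assms Complex_notin_Ints in auto)

lemma norm_powr_csc_vertical_le_uniform:
  assumes "0 < x" "x \<notin> \<int>"
  obtains K where
    "\<And>w t. \<bar>Re w\<bar> \<le> R \<Longrightarrow> \<bar>Im w\<bar> \<le> R \<Longrightarrow> norm (powr_csc w (Complex x t)) \<le> K * exp (- \<bar>t\<bar>)"
proof -
  define A where "A = (x powr (- R) + fact (nat \<lceil>R\<rceil>) * exp (x + 1)) * exp (pi / 2 * R)"
  have "norm (powr_csc w (Complex x t)) \<le> A / (\<bar>sin (pi * x)\<bar> / 2) * exp (- \<bar>t\<bar>)"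
    if "\<bar>Re w\<bar> \<le> R" "\<bar>Im w\<bar> \<le> R" for w t
    unfolding powr_csc_def norm_divide
  proof (rule divide_le_mult_exp_minus_abs)
    have "norm (Complex x t powr (-w)) \<le> A * exp \<bar>Im (Complex x t)\<bar>"
      unfolding A_def
      by (rule norm_powr_minus_le_exp_abs_Im) (use assms that abs_Re_le_cmod[of "Complex x t"] in auto)
    then show "norm (Complex x t powr (-w)) \<le> A * exp \<bar>t\<bar>"
      by simp
    show "\<bar>sin (pi * x)\<bar> / 2 * exp (pi * \<bar>t\<bar>) \<le> norm (sin (pi * Complex x t))"
      by (rule norm_sin_pi_Complex_ge)
    show "0 < \<bar>sin (pi * x)\<bar> / 2"
      using assms sin_times_pi_eq_0[of x] by (simp add: mult.commute)
  qed simp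
  then show thesis
    by (rule that)
qed

lemma norm_powr_csc_vertical_le:
  assumes "0 < x" "x \<notin> \<int>"
  obtains K where "\<And>t. norm (powr_csc w (Complex x t)) \<le> K * exp (- \<bar>t\<bar>)"
proof -
  obtain K where "\<And>v t. \<bar>Re v\<bar> \<le> \<bar>Re w\<bar> + \<bar>Im w\<bar> \<Longrightarrow> \<bar>Im v\<bar> \<le> \<bar>Re w\<bar> + \<bar>Im w\<bar> \<Longrightarrow>
                   norm (powr_csc v (Complex x t)) \<le> K * exp (- \<bar>t\<bar>)"
    by (rule norm_powr_csc_vertical_le_uniform[OF assms]) (rule that)
  then show thesis
    by (intro that[of K]) simp
qed

lemma norm_powr_csc_vertical_le_Re_nonneg:
  assumes "0 < x" "x \<notin> \<int>" "0 \<le> Re w"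
  shows "norm (powr_csc w (Complex x t))
           \<le> x powr (- Re w) * exp (pi / 2 * \<bar>Im w\<bar>) / (\<bar>sin (pi * x)\<bar> / 2) * exp (- \<bar>t\<bar>)"
  unfolding powr_csc_def norm_divide
proof (rule divide_le_mult_exp_minus_abs)
  have "norm (Complex x t powr (-w)) \<le> norm (Complex x t) powr (- Re w) * exp (pi / 2 * \<bar>Im w\<bar>)"
    using assms by (intro norm_powr_minus_le) simp
  also have "\<dots> \<le> x powr (- Re w) * exp (pi / 2 * \<bar>Im w\<bar>)"
    using assms abs_Re_le_cmod[of "Complex x t"] by (intro mult_right_mono powr_mono2') auto
  also have "\<dots> \<le> x powr (- Re w) * exp (pi / 2 * \<bar>Im w\<bar>) * exp \<bar>t\<bar>"
    using mult_left_mono[of 1 "exp \<bar>t\<bar>" "x powr (- Re w) * exp (pi / 2 * \<bar>Im w\<bar>)"] by simp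
  finally show "norm (Complex x t powr (-w)) \<le> x powr (- Re w) * exp (pi / 2 * \<bar>Im w\<bar>) * exp \<bar>t\<bar>" .
  show "\<bar>sin (pi * x)\<bar> / 2 * exp (pi * \<bar>t\<bar>) \<le> norm (sin (pi * Complex x t))"
    by (rule norm_sin_pi_Complex_ge)
  show "0 < \<bar>sin (pi * x)\<bar> / 2"
    using assms sin_times_pi_eq_0[of x] by (simp add: mult.commute)
qed simp

lemma norm_powr_csc_horizontal_le:
  assumes "0 < Re z" "Re z \<le> X" "1 \<le> \<bar>Im z\<bar>" "\<bar>Re w\<bar> \<le> R" "\<bar>Im w\<bar> \<le> R"
  shows "norm (powr_csc w z)
           \<le> 4 * ((1 + fact (nat \<lceil>R\<rceil>) * exp (X + 1)) * exp (pi / 2 * R)) * exp (- \<bar>Im z\<bar>)"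
proof -
  have "norm (z powr (-w)) \<le> (1 + fact (nat \<lceil>R\<rceil>) * exp (X + 1)) * exp (pi / 2 * R) * exp \<bar>Im z\<bar>"
    using norm_powr_minus_le_exp_abs_Im[of 1 z X w R] assms abs_Im_le_cmod[of z] by simp
  moreover have "1 / 4 * exp (pi * \<bar>Im z\<bar>) \<le> norm (sin (pi * z))"
  proof -
    have "1 \<le> \<bar>pi * Im z\<bar>"
      using assms mult_mono[of 1 pi 1 "\<bar>Im z\<bar>"] pi_ge_two by (simp add: abs_mult)
    then have "exp (pi * \<bar>Im z\<bar>) \<le> 4 * \<bar>sinh (pi * Im z)\<bar>"
      using exp_abs_le_four_abs_sinh[of "pi * Im z"] by (simp add: abs_mult)
    then show ?thesis
      using abs_sinh_Im_le_norm_sin[of "pi * z"] by simp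
  qed
  ultimately have "norm (z powr (-w)) / norm (sin (pi * z))
                     \<le> (1 + fact (nat \<lceil>R\<rceil>) * exp (X + 1)) * exp (pi / 2 * R) / (1 / 4) * exp (- \<bar>Im z\<bar>)"
    by (intro divide_le_mult_exp_minus_abs) auto
  then show ?thesis
    by (simp add: powr_csc_def norm_divide)
qed

lemma integrable_powr_csc_vertical:
  assumes "0 < x" "x \<notin> \<int>"
  shows "(\<lambda>t. powr_csc w (Complex x t)) integrable_on UNIV"
proof -
  obtain K where K: "\<And>t. norm (powr_csc w (Complex x t)) \<le> K * exp (- \<bar>t\<bar>)"
    by (rule norm_powr_csc_vertical_le[OF assms, where w = w]) (rule that)
  show ?thesis
    by (rule integrable_on_UNIV_exp_decay[OF continuous_on_powr_csc_vertical[OF assms] K])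
qed

lemma has_field_derivative_powr_csc_exponent:
  assumes "z \<noteq> 0"
  shows "((\<lambda>w. powr_csc w z) has_field_derivative - Ln z * powr_csc w z) (at w within U)"
proof (cases "sin (of_real pi * z) = 0")
  case True
  \<comment> \<open>then \<open>powr_csc w z = 0\<close> for every \<open>w\<close>, by the convention \<open>x / 0 = 0\<close>\<close>
  then show ?thesis
    by (simp add: powr_csc_def)
next
  case False
  with assms show ?thesis
    unfolding powr_csc_def powr_def by (auto intro!: derivative_eq_intros)
qed

definition csc_line_integral :: "real \<Rightarrow> complex \<Rightarrow> complex" where
  "csc_line_integral x w = integral UNIV (\<lambda>t. powr_csc w (Complex x t))"

lemma holomorphic_integral_powr_csc_vertical_ivl:
  assumes "0 < x" "x \<notin> \<int>"
  shows "(\<lambda>w. integral {- a..a} (\<lambda>t. powr_csc w (Complex x t))) holomorphic_on UNIV"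
proof -
  have nonzero: "Complex x t \<noteq> 0" for t
    using assms by (simp add: complex_eq_iff)
  have "Complex x t \<notin> \<real>\<^sub>\<le>\<^sub>0" "sin (of_real pi * Complex x t) \<noteq> 0" for t
    using assms Complex_notin_Ints sin_pi_eq_0_iff_Ints by (auto simp: complex_nonpos_Reals_iff)
  then have "continuous_on (UNIV \<times> cbox (- a) a) (\<lambda>(w, t).
          - Ln (Complex x t) * (exp (- w * Ln (Complex x t)) / sin (of_real pi * Complex x t)))"
    by (auto simp: split_beta intro!: continuous_intros)
  then have cont: "continuous_on (UNIV \<times> cbox (- a) a)
                     (\<lambda>(w, t). - Ln (Complex x t) * powr_csc w (Complex x t))"
    by (simp add: powr_csc_def powr_def split_beta nonzero)
  have "(\<lambda>w. integral (cbox (- a) a) (\<lambda>t. powr_csc w (Complex x t))) holomorphic_on UNIV"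
  proof (rule leibniz_rule_holomorphic[OF _ _ cont])
    show "((\<lambda>w. powr_csc w (Complex x t)) has_field_derivative - Ln (Complex x t) * powr_csc w (Complex x t))
            (at w within UNIV)" for w t
      using nonzero by (rule has_field_derivative_powr_csc_exponent)
    show "(\<lambda>t. powr_csc w (Complex x t)) integrable_on cbox (- a) a" for w
      using continuous_on_powr_csc_vertical[OF assms]
      by (intro integrable_continuous) (auto intro: continuous_on_subset)
  qed auto
  then show ?thesis
    by simp
qed

lemma holomorphic_csc_line_integral:
  assumes "0 < x" "x \<notin> \<int>"
  shows "csc_line_integral x holomorphic_on UNIV"
proof -
  have "csc_line_integral x holomorphic_on ball w0 1" for w0
  proof -
    obtain K where K: "\<And>w t. \<bar>Re w\<bar> \<le> \<bar>Re w0\<bar> + \<bar>Im w0\<bar> + 1 \<Longrightarrow> \<bar>Im w\<bar> \<le> \<bar>Re w0\<bar> + \<bar>Im w0\<bar> + 1 \<Longrightarrow>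
                         norm (powr_csc w (Complex x t)) \<le> K * exp (- \<bar>t\<bar>)"
      by (rule norm_powr_csc_vertical_le_uniform[OF assms]) (rule that)
    have "norm (powr_csc w (Complex x t)) \<le> K * exp (- \<bar>t\<bar>)" if "w \<in> cball w0 1" for w t
    proof (rule K)
      have "norm (w - w0) \<le> 1"
        using that by (simp add: dist_norm norm_minus_commute)
      then show "\<bar>Re w\<bar> \<le> \<bar>Re w0\<bar> + \<bar>Im w0\<bar> + 1" "\<bar>Im w\<bar> \<le> \<bar>Re w0\<bar> + \<bar>Im w0\<bar> + 1"
        using abs_Re_le_cmod[of "w - w0"] abs_Im_le_cmod[of "w - w0"] by auto
    qed
    then show ?thesis
      unfolding csc_line_integral_def
      using assms integrable_exp_minus_abs
      by (intro holomorphic_on_integral_UNIV[where h = "\<lambda>t. K * exp (- \<bar>t\<bar>)"]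
          holomorphic_integral_powr_csc_vertical_ivl integrable_powr_csc_vertical integrable_on_mult_right) auto
  qed
  then have "csc_line_integral x holomorphic_on (\<Union>w0\<in>UNIV. ball w0 1)"
    by (intro holomorphic_on_UN_open) auto
  moreover have "(\<Union>w0\<in>UNIV. ball w0 1) = (UNIV :: complex set)"
    by (auto intro: centre_in_ball[THEN iffD2])
  ultimately show ?thesis
    by simp
qed

lemma integral_symmetric_ivl_powr_csc_tendsto:
  assumes "0 < x" "x \<notin> \<int>"
  shows "(\<lambda>n::nat. integral {- real n..real n} (\<lambda>t. powr_csc w (Complex x t))) \<longlonglongrightarrow> csc_line_integral x w"
proof -
  obtain K where K: "\<And>t. norm (powr_csc w (Complex x t)) \<le> K * exp (- \<bar>t\<bar>)"
    by (rule norm_powr_csc_vertical_le[OF assms, where w = w]) (rule that)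
  show ?thesis
    unfolding csc_line_integral_def
    using integrable_powr_csc_vertical[OF assms] integrable_on_mult_right[OF integrable_exp_minus_abs]
    by (rule integral_symmetric_ivl_tendsto) (rule K)
qed

section \<open>Shifting the line of integration\<close>

lemma residue_powr_csc:
  assumes "1 \<le> k"
  shows "residue (powr_csc w) (of_nat k) = (-1) ^ k * of_nat k powr (-w) / pi"
proof -
  have cos_k: "cos (of_real pi * of_nat k) = ((-1) ^ k :: complex)"
    using cos_of_real[of "pi * real k"] by simp
  have "residue (\<lambda>z. z powr (-w) / sin (of_real pi * z)) (of_nat k)
          = of_nat k powr (-w) / (of_real pi * cos (of_real pi * of_nat k))"
  proof (rule residue_simple_pole_deriv[where s = "{z. 0 < Re z}"])
    show "(\<lambda>z. z powr (-w)) holomorphic_on {z. 0 < Re z}"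
      by (intro holomorphic_intros) (auto simp: complex_nonpos_Reals_iff)
    show "((\<lambda>z. sin (of_real pi * z)) has_field_derivative of_real pi * cos (of_real pi * of_nat k))
            (at (of_nat k))"
      by (auto intro!: derivative_eq_intros)
    show "sin (of_real pi * of_nat k :: complex) = 0"
      by (simp add: sin_pi_eq_0_iff_Ints)
    show "(of_nat k :: complex) powr (-w) \<noteq> 0"
      using assms by (simp add: powr_def)
  qed (use assms cos_k in \<open>auto intro!: holomorphic_intros convex_connected convex_halfspace_Re_gt
                               open_halfspace_Re_gt\<close>)
  then have "residue (powr_csc w) (of_nat k) = of_nat k powr (-w) / (of_real pi * (-1) ^ k)"
    unfolding powr_csc_def[abs_def] cos_k .
  also have "\<dots> = (-1) ^ k * of_nat k powr (-w) / pi"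
    by (cases "even k") simp_all
  finally show ?thesis .
qed

lemma contour_integral_rectpath_eq_residue:
  assumes "open S" "connected S" "f holomorphic_on S - {p}" "cbox a b \<subseteq> S" "p \<in> box a b"
  shows "contour_integral (rectpath a b) f = 2 * pi * \<i> * residue f p"
proof -
  have le: "Re a \<le> Re b" "Im a \<le> Im b"
    using assms(5) by (auto simp: in_box_complex_iff)
  have "path_image (rectpath a b) \<subseteq> S - {p}"
    using path_image_rectpath_subset_cbox[OF le] path_image_rectpath_inter_box[OF le] assms(4,5)
    by blast
  moreover have "\<forall>z. z \<notin> S \<longrightarrow> winding_number (rectpath a b) z = 0"
    using assms(4) by (auto intro!: winding_number_rectpath_outside[OF le])
  ultimately have "contour_integral (rectpath a b) f
                     = 2 * pi * \<i> * (\<Sum>q\<in>{p}. winding_number (rectpath a b) q * residue f q)"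
    using assms(1-3) by (intro Residue_theorem) auto
  then show ?thesis
    using winding_number_rectpath[OF assms(5)] by simp
qed

lemma contour_integral_rectpath_sides:
  assumes "continuous_on (path_image (rectpath (Complex a c) (Complex b d))) f" "c < d"
  shows "contour_integral (rectpath (Complex a c) (Complex b d)) f
           = contour_integral (linepath (Complex a c) (Complex b c)) f
             - contour_integral (linepath (Complex a d) (Complex b d)) f
             + \<i> * integral {c..d} (\<lambda>t. f (Complex b t)) - \<i> * integral {c..d} (\<lambda>t. f (Complex a t))"
proof -
  define A B C D where "A = Complex a c" "B = Complex b c" "C = Complex b d" "D = Complex a d"
  have image: "path_image (rectpath A C)
                 = closed_segment A B \<union> closed_segment B C \<union> closed_segment C D \<union> closed_segment D A"
    by (simp add: rectpath_def Let_def path_image_join A_B_C_D_def Un_assoc)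
  have "continuous_on (path_image (rectpath A C)) f"
    using assms(1) by (simp add: A_B_C_D_def)
  then have AB: "continuous_on (closed_segment A B) f" and BC: "continuous_on (closed_segment B C) f"
    and CD: "continuous_on (closed_segment C D) f" and DA: "continuous_on (closed_segment D A) f"
    unfolding image by (auto elim: continuous_on_subset)
  have "contour_integral (rectpath A C) f
          = contour_integral (linepath A B) f + contour_integral (linepath B C) f
            + contour_integral (linepath C D) f + contour_integral (linepath D A) f"
  proof -
    have "Complex (Re C) (Im A) = B" "Complex (Re A) (Im C) = D"
      by (simp_all add: A_B_C_D_def)
    then show ?thesis
      using AB BC CD DA
      by (simp add: rectpath_def Let_def contour_integrable_continuous_linepath
                    contour_integrable_joinI valid_path_join add.assoc)
  qed
  also have "contour_integral (linepath C D) f = - contour_integral (linepath D C) f"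
    using CD by (rule contour_integral_reverse_linepath)
  also have "contour_integral (linepath D A) f = - contour_integral (linepath A D) f"
    using DA by (rule contour_integral_reverse_linepath)
  also have "contour_integral (linepath B C) f = \<i> * integral {c..d} (\<lambda>t. f (Complex b t))"
    using assms(2) by (intro contour_integral_linepath_same_Re) (auto simp: A_B_C_D_def)
  also have "contour_integral (linepath A D) f = \<i> * integral {c..d} (\<lambda>t. f (Complex a t))"
    using assms(2) by (intro contour_integral_linepath_same_Re) (auto simp: A_B_C_D_def)
  finally show ?thesis
    by (simp add: A_B_C_D_def)
qed

lemma norm_contour_integral_horizontal_powr_csc_le:
  assumes "0 < a" "a \<le> b"
  obtains C where
    "\<And>T. 1 \<le> \<bar>T\<bar> \<Longrightarrow> norm (contour_integral (linepath (Complex a T) (Complex b T)) (powr_csc w))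
                          \<le> C * exp (- \<bar>T\<bar>)"
proof -
  define R where "R = \<bar>Re w\<bar> + \<bar>Im w\<bar>"
  define K where "K = 4 * ((1 + fact (nat \<lceil>R\<rceil>) * exp (b + 1)) * exp (pi / 2 * R))"
  have "norm (contour_integral (linepath (Complex a T) (Complex b T)) (powr_csc w))
          \<le> K * exp (- \<bar>T\<bar>) * (b - a)" if T: "1 \<le> \<bar>T\<bar>" for T
  proof -
    have segment: "closed_segment (Complex a T) (Complex b T) = {z. Im z = T \<and> Re z \<in> {a..b}}"
      using assms by (simp add: closed_segment_same_Im closed_segment_eq_real_ivl)
    have "closed_segment (Complex a T) (Complex b T) \<subseteq> {z. 0 < Re z} - \<int>"
      using assms T by (auto simp: segment elim!: Ints_cases)
    then have "powr_csc w contour_integrable_on linepath (Complex a T) (Complex b T)"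
      by (intro contour_integrable_continuous_linepath holomorphic_on_imp_continuous_on
          holomorphic_on_subset[OF holomorphic_powr_csc])
    moreover have "norm (powr_csc w z) \<le> K * exp (- \<bar>T\<bar>)"
      if "z \<in> closed_segment (Complex a T) (Complex b T)" for z
    proof -
      have "Im z = T" "a \<le> Re z" "Re z \<le> b"
        using that by (auto simp: segment)
      then show ?thesis
        using norm_powr_csc_horizontal_le[of z b w R] assms T by (simp add: K_def R_def)
    qed
    ultimately have "norm (contour_integral (linepath (Complex a T) (Complex b T)) (powr_csc w))
                       \<le> K * exp (- \<bar>T\<bar>) * norm (Complex b T - Complex a T)"
      by (intro has_contour_integral_bound_linepath[OF has_contour_integral_integral])
         (auto simp: K_def)
    also have "norm (Complex b T - Complex a T) = b - a"
      using assms by (simp add: cmod_def)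
    finally show ?thesis .
  qed
  then show thesis
    by (intro that[of "K * (b - a)"]) (simp add: mult_ac)
qed

lemma contour_integral_horizontal_powr_csc_tendsto_0:
  assumes "0 < a" "a \<le> b"
  shows "((\<lambda>T. contour_integral (linepath (Complex a T) (Complex b T)) (powr_csc w)) \<longlongrightarrow> 0) at_infinity"
proof -
  obtain C where "\<And>T. 1 \<le> \<bar>T\<bar> \<Longrightarrow> norm (contour_integral (linepath (Complex a T) (Complex b T)) (powr_csc w))
                          \<le> C * exp (- \<bar>T\<bar>)"
    by (rule norm_contour_integral_horizontal_powr_csc_le[OF assms]) (rule that)
  then show ?thesis
    by (rule tendsto_0_at_infinity_exp_decay)
qed

lemma holomorphic_powr_csc_strip:
  assumes "1 \<le> k"
  shows "powr_csc w holomorphic_on {z. real k - 1 < Re z \<and> Re z < real k + 1} - {of_nat k}"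
proof (rule holomorphic_on_subset[OF holomorphic_powr_csc])
  show "{z. real k - 1 < Re z \<and> Re z < real k + 1} - {of_nat k} \<subseteq> {z. 0 < Re z} - \<int>"
  proof
    fix z
    assume z: "z \<in> {z. real k - 1 < Re z \<and> Re z < real k + 1} - {of_nat k}"
    show "z \<in> {z. 0 < Re z} - \<int>"
    proof (intro DiffI CollectI notI)
      show "0 < Re z"
        using z assms by auto
    next
      assume "z \<in> \<int>"
      then obtain m where m: "z = of_int m"
        by (auto elim: Ints_cases)
      have "m \<noteq> int k"
      proof
        assume "m = int k"
        with z m show False
          by simp
      qed
      moreover from z m have "real_of_int (int k - 1) < of_int m" "of_int m < real_of_int (int k + 1)"
        by auto
      then have "int k - 1 < m" "m < int k + 1"
        by (simp_all only: of_int_less_iff)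
      ultimately show False
        by linarith
    qed
  qed
qed

lemma contour_integral_rectpath_powr_csc:
  assumes "1 \<le> k" "real k - 1 < x" "x < real k" "0 < T"
  shows "contour_integral (linepath (Complex x (- T)) (Complex (x + 1) (- T))) (powr_csc w)
           - contour_integral (linepath (Complex x T) (Complex (x + 1) T)) (powr_csc w)
           + \<i> * (integral {- T..T} (\<lambda>t. powr_csc w (Complex (x + 1) t))
                   - integral {- T..T} (\<lambda>t. powr_csc w (Complex x t)))
         = 2 * \<i> * (-1) ^ k * of_nat k powr (-w)"
proof -
  define S where "S = {z. real k - 1 < Re z \<and> Re z < real k + 1}"
  define a b where "a = Complex x (- T)" and "b = Complex (x + 1) T"
  have holo: "powr_csc w holomorphic_on S - {of_nat k}"
    unfolding S_def using assms(1) by (rule holomorphic_powr_csc_strip)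
  have k: "of_nat k \<in> box a b" and le: "Re a \<le> Re b" "Im a \<le> Im b" and "cbox a b \<subseteq> S"
    using assms by (auto simp: a_def b_def in_box_complex_iff in_cbox_complex_iff S_def)
  then have "path_image (rectpath a b) \<subseteq> S - {of_nat k}"
    using path_image_rectpath_subset_cbox[OF le] path_image_rectpath_inter_box[OF le] by blast
  with holo have "continuous_on (path_image (rectpath a b)) (powr_csc w)"
    by (intro holomorphic_on_imp_continuous_on) (rule holomorphic_on_subset)
  then have sides: "contour_integral (rectpath a b) (powr_csc w)
      = contour_integral (linepath (Complex x (- T)) (Complex (x + 1) (- T))) (powr_csc w)
        - contour_integral (linepath (Complex x T) (Complex (x + 1) T)) (powr_csc w)
        + \<i> * (integral {- T..T} (\<lambda>t. powr_csc w (Complex (x + 1) t))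
                - integral {- T..T} (\<lambda>t. powr_csc w (Complex x t)))"
    using assms(4) unfolding a_def b_def by (subst contour_integral_rectpath_sides) (auto simp: algebra_simps)
  have "open S" "connected S"
    unfolding S_def Collect_conj_eq
    by (intro open_Int open_halfspace_Re_gt open_halfspace_Re_lt,
        intro convex_connected convex_Int convex_halfspace_Re_gt convex_halfspace_Re_lt)
  then have "contour_integral (rectpath a b) (powr_csc w) = 2 * pi * \<i> * residue (powr_csc w) (of_nat k)"
    using holo \<open>cbox a b \<subseteq> S\<close> k by (intro contour_integral_rectpath_eq_residue)
  also have "\<dots> = 2 * \<i> * (-1) ^ k * of_nat k powr (-w)"
    using residue_powr_csc[OF assms(1), of w] by simp
  finally show ?thesis
    unfolding sides .
qed

lemma csc_line_integral_shift:
  assumes "1 \<le> k" "real k - 1 < x" "x < real k"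
  shows "csc_line_integral (x + 1) w - csc_line_integral x w = 2 * (-1) ^ k * of_nat k powr (-w)"
proof -
  have x: "0 < x" "x \<notin> \<int>"
    using assms Ints_not_between[of "int k - 1" x] by auto
  have x1: "0 < x + 1" "x + 1 \<notin> \<int>"
    using assms Ints_not_between[of "int k" "x + 1"] by auto
  define H where "H T = contour_integral (linepath (Complex x T) (Complex (x + 1) T)) (powr_csc w)" for T
  define V where "V y n = integral {- real n..real n} (\<lambda>t. powr_csc w (Complex y t))" for y n
  have "(H \<longlongrightarrow> 0) at_infinity"
    unfolding H_def using x by (intro contour_integral_horizontal_powr_csc_tendsto_0) auto
  note H = tendsto_at_infinity_along_nat[OF this]
  have "(\<lambda>n. V y n) \<longlonglongrightarrow> csc_line_integral y w" if "0 < y" "y \<notin> \<int>" for y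
    unfolding V_def using that by (rule integral_symmetric_ivl_powr_csc_tendsto)
  with H x x1 have "(\<lambda>n. H (- real n) - H (real n) + \<i> * (V (x + 1) n - V x n))
                      \<longlonglongrightarrow> 0 - 0 + \<i> * (csc_line_integral (x + 1) w - csc_line_integral x w)"
    by (intro tendsto_intros) auto
  moreover have "eventually (\<lambda>n. H (- real n) - H (real n) + \<i> * (V (x + 1) n - V x n)
                   = 2 * \<i> * (-1) ^ k * of_nat k powr (-w)) sequentially"
    unfolding eventually_sequentially H_def V_def using assms
    by (intro exI[of _ 1] allI impI contour_integral_rectpath_powr_csc) auto
  ultimately have "\<i> * (csc_line_integral (x + 1) w - csc_line_integral x w)
                     = 2 * \<i> * (-1) ^ k * of_nat k powr (-w)"
    using LIMSEQ_unique tendsto_eventually by fastforce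
  then show ?thesis
    by (simp add: mult.assoc)
qed

lemma csc_line_integral_shift_nat:
  assumes "0 < x" "x < 1"
  shows "csc_line_integral (x + real n) w
           = csc_line_integral x w - 2 * (\<Sum>k<n. (-1) ^ k / of_nat (Suc k) powr w)"
proof (induction n)
  case (Suc n)
  have "csc_line_integral (x + real n + 1) w - csc_line_integral (x + real n) w
          = 2 * (-1) ^ Suc n * of_nat (Suc n) powr (-w)"
    using assms by (intro csc_line_integral_shift) auto
  also have "\<dots> = - 2 * ((-1) ^ n / of_nat (Suc n) powr w)"
    by (simp add: powr_minus divide_inverse)
  finally show ?case
    using Suc.IH by (simp add: algebra_simps)
qed simp

lemma csc_line_integral_shift_tendsto_0:
  assumes "0 < x" "x \<notin> \<int>" "0 < Re w"
  shows "(\<lambda>n::nat. csc_line_integral (x + real n) w) \<longlonglongrightarrow> 0"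
proof -
  define B where "B = exp (pi / 2 * \<bar>Im w\<bar>) / (\<bar>sin (pi * x)\<bar> / 2)"
  have bound: "norm (csc_line_integral (x + real n) w)
                 \<le> (x + real n) powr (- Re w) * B * integral UNIV (\<lambda>t::real. exp (- \<bar>t\<bar>))" for n
  proof -
    have y: "0 < x + real n" "x + real n \<notin> \<int>"
    proof -
      show "0 < x + real n"
        using assms(1) by simp
      show "x + real n \<notin> \<int>"
      proof
        assume "x + real n \<in> \<int>"
        then have "x + real n - real n \<in> \<int>"
          by (intro Ints_diff) auto
        with assms(2) show False
          by simp
      qed
    qed
    have "norm (powr_csc w (Complex (x + real n) t)) \<le> (x + real n) powr (- Re w) * B * exp (- \<bar>t\<bar>)"
      for t
      using norm_powr_csc_vertical_le_Re_nonneg[OF y, of w t] assms(3)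
      unfolding abs_sin_pi_add_nat B_def by (simp add: mult.assoc)
    then have "norm (csc_line_integral (x + real n) w)
                 \<le> integral UNIV (\<lambda>t. (x + real n) powr (- Re w) * B * exp (- \<bar>t\<bar>))"
      unfolding csc_line_integral_def
      by (intro integral_norm_bound_integral[OF integrable_powr_csc_vertical[OF y]
            integrable_on_mult_right[OF integrable_exp_minus_abs]])
    then show ?thesis
      by simp
  qed
  have "(\<lambda>n::nat. (x + real n) powr (- Re w)) \<longlonglongrightarrow> 0"
  proof (rule tendsto_neg_powr)
    show "- Re w < 0"
      using assms(3) by simp
    show "filterlim (\<lambda>n::nat. x + real n) at_top sequentially"
      by (rule filterlim_tendsto_add_at_top[OF tendsto_const filterlim_real_sequentially])
  qed
  from tendsto_mult_left_zero[OF tendsto_mult_left_zero[OF this]]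
  show ?thesis
    by (rule Lim_null_comparison[OF always_eventually[OF allI[OF bound]]])
qed

lemma sums_csc_line_integral:
  assumes "0 < x" "x < 1" "0 < Re w"
  shows "(\<lambda>k. (-1) ^ k / of_nat (Suc k) powr w) sums (csc_line_integral x w / 2)"
proof -
  have "x \<notin> \<int>"
    using assms Ints_not_between[of 0 x] by simp
  then have "(\<lambda>n. (csc_line_integral x w - csc_line_integral (x + real n) w) / 2)
               \<longlonglongrightarrow> (csc_line_integral x w - 0) / 2"
    using assms by (intro tendsto_intros csc_line_integral_shift_tendsto_0) auto
  then show ?thesis
    unfolding sums_def csc_line_integral_shift_nat[OF assms(1,2)] by simp
qed

section \<open>The Dirichlet eta function\<close>

lemma dirichlet_eta_eqI:
  assumes "f holomorphic_on UNIV"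
    and "\<And>z. 0 < Re z \<Longrightarrow> (\<lambda>k::nat. (-1) ^ k / (of_nat (Suc k)) powr z) sums f z"
  shows "dirichlet_eta = f"
  unfolding dirichlet_eta_def
proof (rule the1_equality)
  show "\<exists>!f. f holomorphic_on UNIV \<and> (\<forall>z. 0 < Re z \<longrightarrow> (\<lambda>k::nat. (-1) ^ k / (of_nat (Suc k)) powr z) sums f z)"
  proof (rule ex1I[of _ f])
    fix g
    assume g: "g holomorphic_on UNIV \<and> (\<forall>z. 0 < Re z \<longrightarrow> (\<lambda>k::nat. (-1) ^ k / (of_nat (Suc k)) powr z) sums g z)"
    show "g = f"
    proof
      fix z
      show "g z = f z"
      proof (rule analytic_continuation_open[of "{z. 0 < Re z}" UNIV g f])
        show "{z. 0 < Re z} \<noteq> {}"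
          by (auto intro!: exI[of _ 1])
        show "g w = f w" if "w \<in> {z. 0 < Re z}" for w
          using g assms(2) that by (auto intro: sums_unique2)
      qed (use g assms(1) in \<open>auto intro: open_halfspace_Re_gt\<close>)
    qed
  qed (use assms in auto)
qed (use assms in auto)

lemma dirichlet_eta_eq_csc_line_integral:
  assumes "0 < c" "c < 1"
  shows "dirichlet_eta = (\<lambda>w. csc_line_integral c w / 2)"
proof -
  have "c \<notin> \<int>"
    using assms Ints_not_between[of 0 c] by simp
  then show ?thesis
    using assms holomorphic_csc_line_integral sums_csc_line_integral
    by (intro dirichlet_eta_eqI holomorphic_intros) auto
qed

section \<open>Integration by parts\<close>

lemma has_field_derivative_powr_csc:
  fixes z w :: complex
  assumes "z \<notin> \<real>\<^sub>\<le>\<^sub>0" "z \<notin> \<int>"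
  shows "(powr_csc w has_field_derivative
            - w * powr_csc (w + 1) z - pi * (z powr (-w) * cos (pi * z) / (sin (pi * z))\<^sup>2)) (at z)"
proof -
  have sin: "sin (of_real pi * z) \<noteq> 0"
    using assms(2) sin_pi_eq_0_iff_Ints by blast
  have "((\<lambda>z. z powr (-w) / sin (pi * z)) has_field_derivative
          ((- w * z powr (- w - 1)) * sin (pi * z) - z powr (-w) * (cos (pi * z) * pi))
            / (sin (pi * z) * sin (pi * z))) (at z)"
    using assms(1) sin by (auto intro!: derivative_eq_intros)
  moreover have "z powr (- w - 1) = z powr (- (w + 1))"
    by (simp only: minus_add_distrib diff_conv_add_uminus)
  ultimately show ?thesis
    using sin unfolding powr_csc_def[abs_def] by (simp add: field_simps power2_eq_square)
qed

lemma has_vector_derivative_powr_csc_vertical: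
  assumes "0 < c" "c \<notin> \<int>"
  shows "((\<lambda>t. powr_csc w (Complex c t)) has_vector_derivative
            \<i> * (- w * powr_csc (w + 1) (Complex c t)
                 - pi * (Complex c t powr (-w) * cos (pi * Complex c t) / (sin (pi * Complex c t))\<^sup>2)))
          (at t within A)"
proof -
  define D where "D z = - w * powr_csc (w + 1) z - pi * (z powr (-w) * cos (pi * z) / (sin (pi * z))\<^sup>2)"
    for z :: complex
  have Complex: "Complex c t' = of_real c + \<i> * of_real t'" for t'
    by (simp add: Complex_eq)
  have "((\<lambda>\<zeta>. powr_csc w (of_real c + \<i> * \<zeta>)) has_field_derivative D (Complex c t) * \<i>) (at (of_real t))"
  proof (rule DERIV_chain2[where f = "powr_csc w"])
    show "(powr_csc w has_field_derivative D (Complex c t)) (at (of_real c + \<i> * of_real t))"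
      unfolding D_def Complex[symmetric] using assms Complex_notin_Ints
      by (intro has_field_derivative_powr_csc) (auto simp: complex_nonpos_Reals_iff)
  qed (auto intro!: derivative_eq_intros)
  then have "((\<lambda>t. powr_csc w (of_real c + \<i> * of_real t)) has_vector_derivative D (Complex c t) * \<i>)
               (at t within A)"
    by (rule has_vector_derivative_real_field)
  then show ?thesis
    by (simp add: Complex D_def mult.commute)
qed

lemma powr_cot_csc_eq:
  fixes z w :: complex
  shows "z powr (-w) * cos (pi * z) / (sin (pi * z))\<^sup>2 = powr_csc w z * (cos (pi * z) / sin (pi * z))"
  by (simp add: powr_csc_def power2_eq_square)

lemma norm_powr_cot_csc_vertical_le:
  assumes "0 < c" "c \<notin> \<int>"
  obtains K where "\<And>t. norm (Complex c t powr (-s) * cos (pi * Complex c t) / (sin (pi * Complex c t))\<^sup>2)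
                         \<le> K * exp (- \<bar>t\<bar>)"
proof -
  obtain K where K: "\<And>t. norm (powr_csc s (Complex c t)) \<le> K * exp (- \<bar>t\<bar>)"
    by (rule norm_powr_csc_vertical_le[OF assms, where w = s]) (rule that)
  have "norm (Complex c t powr (-s) * cos (pi * Complex c t) / (sin (pi * Complex c t))\<^sup>2)
          \<le> K / \<bar>sin (pi * c)\<bar> * exp (- \<bar>t\<bar>)" for t
  proof -
    have "norm (Complex c t powr (-s) * cos (pi * Complex c t) / (sin (pi * Complex c t))\<^sup>2)
            = norm (powr_csc s (Complex c t)) * norm (cos (pi * Complex c t) / sin (pi * Complex c t))"
      by (simp only: powr_cot_csc_eq norm_mult)
    also have "\<dots> \<le> K * exp (- \<bar>t\<bar>) * (1 / \<bar>sin (pi * c)\<bar>)"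
      using K[of t] norm_cot_pi_Complex_le[OF assms(2), of t] order_trans[OF norm_ge_zero K[of t]]
      by (intro mult_mono) auto
    finally show ?thesis
      by simp
  qed
  then show thesis
    by (rule that)
qed

lemma integrable_powr_cot_csc_vertical:
  assumes "0 < c" "c \<notin> \<int>"
  shows "(\<lambda>t. Complex c t powr (-s) * cos (pi * Complex c t) / (sin (pi * Complex c t))\<^sup>2) integrable_on UNIV"
proof -
  obtain K where K: "\<And>t. norm (Complex c t powr (-s) * cos (pi * Complex c t) / (sin (pi * Complex c t))\<^sup>2)
                            \<le> K * exp (- \<bar>t\<bar>)"
    by (rule norm_powr_cot_csc_vertical_le[OF assms, where s = s]) (rule that)
  have "sin (of_real pi * Complex c t) \<noteq> 0" for t
    using assms Complex_notin_Ints sin_pi_eq_0_iff_Ints by blast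
  then have "continuous_on UNIV (\<lambda>t. powr_csc s (Complex c t) * (cos (pi * Complex c t) / sin (pi * Complex c t)))"
    using continuous_on_powr_csc_vertical[OF assms] by (intro continuous_intros) auto
  then show ?thesis
    unfolding powr_cot_csc_eq[symmetric] by (rule integrable_on_UNIV_exp_decay[OF _ K])
qed

lemma powr_csc_vertical_tendsto_0:
  assumes "0 < c" "c \<notin> \<int>"
  shows "((\<lambda>t. powr_csc s (Complex c t)) \<longlongrightarrow> 0) at_infinity"
proof -
  obtain K where K: "\<And>t. norm (powr_csc s (Complex c t)) \<le> K * exp (- \<bar>t\<bar>)"
    by (rule norm_powr_csc_vertical_le[OF assms, where w = s]) (rule that)
  show ?thesis
    by (rule tendsto_0_at_infinity_exp_decay[where C = K]) (rule K)
qed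

lemma powr_csc_vertical_diff_eq_integral:
  fixes s :: complex
  assumes "0 < c" "c \<notin> \<int>" "a \<le> b"
  shows "powr_csc s (Complex c b) - powr_csc s (Complex c a)
           = \<i> * (- s * integral {a..b} (\<lambda>t. powr_csc (s + 1) (Complex c t))
                  - pi * integral {a..b}
                      (\<lambda>t. Complex c t powr (-s) * cos (pi * Complex c t) / (sin (pi * Complex c t))\<^sup>2))"
proof -
  define F where "F t = Complex c t powr (-s) * cos (pi * Complex c t) / (sin (pi * Complex c t))\<^sup>2" for t
  define G where "G t = powr_csc (s + 1) (Complex c t)" for t
  define U where "U t = powr_csc s (Complex c t)" for t
  have F_int: "F integrable_on UNIV"
    unfolding F_def using assms(1,2) by (rule integrable_powr_cot_csc_vertical)
  have G_int: "G integrable_on UNIV"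
    unfolding G_def using assms(1,2) by (rule integrable_powr_csc_vertical)
  have "(U has_vector_derivative \<i> * (- s * G t - pi * F t)) (at t within A)" for t A
    unfolding U_def G_def F_def by (rule has_vector_derivative_powr_csc_vertical[OF assms(1,2)])
  then have "((\<lambda>t. \<i> * (- s * G t - pi * F t)) has_integral U b - U a) {a..b}"
    using assms(3) by (intro fundamental_theorem_of_calculus) auto
  moreover have "((\<lambda>t. \<i> * (- s * G t - pi * F t)) has_integral
                    \<i> * (- s * integral {a..b} G - pi * integral {a..b} F)) {a..b}"
    using integrable_on_subinterval[OF F_int] integrable_on_subinterval[OF G_int]
    by (intro has_integral_mult_right has_integral_diff integrable_integral) auto
  ultimately show ?thesis
    unfolding U_def F_def[abs_def] G_def[abs_def] by (rule has_integral_unique)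
qed

lemma integral_powr_cot_csc_vertical:
  fixes s :: complex
  assumes "0 < c" "c \<notin> \<int>"
  shows "integral UNIV (\<lambda>t. Complex c t powr (-s) * cos (pi * Complex c t) / (sin (pi * Complex c t))\<^sup>2)
           = - (s / pi) * csc_line_integral c (s + 1)"
proof -
  define F where "F t = Complex c t powr (-s) * cos (pi * Complex c t) / (sin (pi * Complex c t))\<^sup>2" for t
  define U where "U t = powr_csc s (Complex c t)" for t
  have "(U \<longlongrightarrow> 0) at_infinity"
    unfolding U_def using assms by (rule powr_csc_vertical_tendsto_0)
  note U = tendsto_at_infinity_along_nat[OF this]
  obtain K where "\<And>t. norm (F t) \<le> K * exp (- \<bar>t\<bar>)"
    using norm_powr_cot_csc_vertical_le[OF assms, where s = s] unfolding F_def by blast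
  then have "(\<lambda>n::nat. integral {- real n..real n} F) \<longlonglongrightarrow> integral UNIV F"
    using integrable_powr_cot_csc_vertical[OF assms] integrable_on_mult_right[OF integrable_exp_minus_abs]
    unfolding F_def[abs_def] by (intro integral_symmetric_ivl_tendsto) auto
  with integral_symmetric_ivl_powr_csc_tendsto[OF assms]
  have "(\<lambda>n. U (real n) - U (- real n)) \<longlonglongrightarrow> \<i> * (- s * csc_line_integral c (s + 1) - pi * integral UNIV F)"
    unfolding U_def F_def[abs_def]
    by (subst powr_csc_vertical_diff_eq_integral[OF assms]) (auto intro!: tendsto_intros)
  with U have "\<i> * (- s * csc_line_integral c (s + 1) - pi * integral UNIV F) = 0"
    using LIMSEQ_unique tendsto_diff by fastforce
  then have "pi * integral UNIV F = - s * csc_line_integral c (s + 1)"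
    by (auto simp: right_minus_eq)
  then show ?thesis
    unfolding F_def[abs_def] by (simp add: field_simps)
qed

theorem mainTheorem4:
  fixes c :: real and s :: complex
  assumes "0 < c" and "c < 1" and "s \<noteq> 0"
  shows "(\<lambda>t::real. (Complex c t) powr (-s) * cos (pi * Complex c t) / (sin (pi * Complex c t))\<^sup>2)
           integrable_on UNIV
       \<and> dirichlet_eta (s + 1) =
           - (pi / (2 * s)) * integral UNIV
               (\<lambda>t::real. (Complex c t) powr (-s) * cos (pi * Complex c t) / (sin (pi * Complex c t))\<^sup>2)"
proof
  have c: "c \<notin> \<int>"
    using assms Ints_not_between[of 0 c] by simp
  with assms(1) show "(\<lambda>t. Complex c t powr (-s) * cos (pi * Complex c t) / (sin (pi * Complex c t))\<^sup>2)
                        integrable_on UNIV"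
    by (rule integrable_powr_cot_csc_vertical)
  have "dirichlet_eta (s + 1) = csc_line_integral c (s + 1) / 2"
    by (simp add: dirichlet_eta_eq_csc_line_integral[OF assms(1,2)])
  also have "\<dots> = - (pi / (2 * s)) * (- (s / pi) * csc_line_integral c (s + 1))"
    using assms(3) by (simp add: field_simps)
  also have "\<dots> = - (pi / (2 * s)) * integral UNIV
                    (\<lambda>t. Complex c t powr (-s) * cos (pi * Complex c t) / (sin (pi * Complex c t))\<^sup>2)"
    using assms(1) c by (simp add: integral_powr_cot_csc_vertical)
  finally show "dirichlet_eta (s + 1) = - (pi / (2 * s)) * integral UNIV
                  (\<lambda>t. Complex c t powr (-s) * cos (pi * Complex c t) / (sin (pi * Complex c t))\<^sup>2)" .
qed

end
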